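(* Let $f(z)=z+\sum_{k=2}^{\infty}a_kz^k$ be analytic in $\mathbb{D}=\{z\in\mathbb{C}:|z|<1\}$ and suppose $zf'(z)-f(z)=\frac12 z^2\phi(z)$ for all $z\in\mathbb{D}$, where $\phi$ is analytic in $\mathbb{D}$ with $|\phi(z)|\le 1$. For $n\ge 2$ let $\rho_n(z;f)=\sum_{k=n+1}^{\infty}a_kz^k$. Then for $n\ge 2$ and $|z|=r<1$, \[|\rho_n(z;f)|\le -\frac{r}{2}\ln(1-r)-\frac{r^2}{2},\qquad |\rho_n'(z;f)|\le \frac{2r^2-r}{2(1-r)}-\frac{\ln(1-r)}{2},\qquad |z\rho_n''(z;f)|\le \frac{r^2(3-2r)}{2(1-r)^2}.\]
   Context: $\ln$ denotes the natural logarithm. *)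

theory Defs
  imports "HOL-Complex_Analysis.Complex_Analysis"
begin

definition taylor_coeff :: "(complex \<Rightarrow> complex) \<Rightarrow> nat \<Rightarrow> complex" where
  "taylor_coeff f k = (deriv ^^ k) f 0 / of_nat (fact k)"

definition rho :: "(complex \<Rightarrow> complex) \<Rightarrow> nat \<Rightarrow> complex \<Rightarrow> complex" where
  "rho f n z = (\<Sum>j. taylor_coeff f (j + n + 1) * z ^ (j + n + 1))"

end

theory Submission
  imports Defs
begin

text \<open>
  Comparing Taylor coefficients in \<open>z f' - f = z\<^sup>2 \<phi> / 2\<close> gives \<open>(k - 1) a\<^sub>k = c\<^sub>k\<^sub>-\<^sub>2 / 2\<close>,
  where the \<open>c\<^sub>j\<close> are the Taylor coefficients of \<open>\<phi>\<close>, and \<open>|c\<^sub>j| \<le> 1\<close> by Cauchy's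
  inequality. Hence \<open>|a\<^sub>k| \<le> 1 / (2 (k - 1))\<close>, and each of the three quantities is
  bounded by the corresponding power series with these majorants, evaluated at \<open>r\<close>;
  for \<open>n \<ge> 2\<close> only the terms with \<open>k \<ge> 3\<close> occur, and the resulting series sum to
  the stated closed forms via \<open>-ln (1 - r) = \<Sum>\<^sub>k\<^sub>\<ge>\<^sub>1 r\<^sup>k / k\<close>.
\<close>

lemma fps_expansion_nth_eq_taylor_coeff:
  fixes F :: "complex fps"
  assumes "f has_fps_expansion F"
  shows "F $ k = taylor_coeff f k"
  using fps_nth_fps_expansion[OF assms] by (simp add: taylor_coeff_def)

lemma holomorphic_has_fps_expansion_sums:
  fixes g :: "complex \<Rightarrow> complex" and G :: "complex fps"
  assumes "g holomorphic_on ball 0 R" "g has_fps_expansion G" "norm z < R"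
  shows "(\<lambda>k. G $ k * z ^ k) sums g z"
  using holomorphic_power_series[OF assms(1), of z] assms(3) fps_nth_fps_expansion[OF assms(2)]
  by simp

lemma norm_sums_le_majorant:
  fixes c :: "nat \<Rightarrow> 'a :: {real_normed_div_algebra, banach}"
  assumes "(\<lambda>k. c k * z ^ k) sums s" "\<And>k. norm (c k) \<le> b k"
    and "(\<lambda>k. b k * norm z ^ k) sums T"
  shows "norm s \<le> T"
proof -
  have le: "norm (c k * z ^ k) \<le> b k * norm z ^ k" for k
    by (simp add: norm_mult norm_power mult_right_mono assms(2))
  have summable: "summable (\<lambda>k. norm (c k * z ^ k))"
    by (rule summable_comparison_test'[OF sums_summable[OF assms(3)]]) (use le in auto)
  have "norm s \<le> (\<Sum>k. norm (c k * z ^ k))"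
    using summable_norm[OF summable] sums_unique[OF assms(1)] by simp
  also have "\<dots> \<le> T"
    using suminf_le[OF le summable sums_summable[OF assms(3)]] sums_unique[OF assms(3)] by simp
  finally show ?thesis .
qed

lemma norm_le_fps_majorant:
  fixes g :: "complex \<Rightarrow> complex" and G :: "complex fps"
  assumes "g holomorphic_on ball 0 R" "g has_fps_expansion G" "\<And>k. norm (G $ k) \<le> b k"
    and "(\<lambda>k. b k * norm z ^ k) sums T" "norm z < R"
  shows "norm (g z) \<le> T"
  by (rule norm_sums_le_majorant[OF holomorphic_has_fps_expansion_sums[OF assms(1,2,5)] assms(3,4)])

lemma norm_fps_deriv_nth_le:
  fixes G :: "'a :: real_normed_field fps"
  assumes "\<And>k. norm (G $ k) \<le> b k"
  shows "norm (fps_deriv G $ k) \<le> real (k + 1) * b (k + 1)"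
  using assms[of "k + 1"] by (simp add: norm_mult mult_left_mono del: of_nat_Suc)

lemma norm_deriv_le_fps_majorant:
  fixes g :: "complex \<Rightarrow> complex" and G :: "complex fps"
  assumes holo: "g holomorphic_on ball 0 R" and G: "g has_fps_expansion G"
    and bound: "\<And>k. norm (G $ k) \<le> b k"
    and "(\<lambda>k. (real (k + 1) * b (k + 1)) * norm z ^ k) sums T" "norm z < R"
  shows "norm (deriv g z) \<le> T"
  by (rule norm_le_fps_majorant[OF holomorphic_deriv[OF holo open_ball] has_fps_expansion_deriv[OF G]
        norm_fps_deriv_nth_le[OF bound] assms(4,5)])

lemma norm_deriv2_le_fps_majorant:
  fixes g :: "complex \<Rightarrow> complex" and G :: "complex fps"
  assumes holo: "g holomorphic_on ball 0 R" and G: "g has_fps_expansion G"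
    and bound: "\<And>k. norm (G $ k) \<le> b k"
    and sums: "(\<lambda>k. (real (k + 1) * real (k + 2) * b (k + 2)) * norm z ^ k) sums T"
    and z: "norm z < R"
  shows "norm (deriv (deriv g) z) \<le> T"
proof (rule norm_deriv_le_fps_majorant[OF holomorphic_deriv[OF holo open_ball] has_fps_expansion_deriv[OF G]
        norm_fps_deriv_nth_le[OF bound] _ z])
  show "(\<lambda>k. real (k + 1) * (real (k + 1 + 1) * b (k + 1 + 1)) * norm z ^ k) sums T"
    using sums by (simp add: mult.assoc)
qed

lemma norm_fps_expansion_nth_le:
  fixes \<phi> :: "complex \<Rightarrow> complex" and \<Phi> :: "complex fps"
  assumes holo: "\<phi> holomorphic_on ball 0 R" and \<Phi>: "\<phi> has_fps_expansion \<Phi>"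
    and bound: "\<forall>w\<in>ball 0 R. norm (\<phi> w) \<le> M" and R: "0 < R"
  shows "norm (\<Phi> $ j) \<le> M / R ^ j"
proof -
  have "eventually (\<lambda>s. norm (\<Phi> $ j) \<le> M / s ^ j) (at_left R)"
    using eventually_at_left_real[OF R]
  proof eventually_elim
    case (elim s)
    have "norm ((deriv ^^ j) \<phi> 0) \<le> fact j * M / s ^ j"
    proof (rule Cauchy_inequality)
      show "\<phi> holomorphic_on ball 0 s"
        using elim by (intro holomorphic_on_subset[OF holo]) auto
      show "continuous_on (cball 0 s) \<phi>"
        using elim by (intro continuous_on_subset[OF holomorphic_on_imp_continuous_on[OF holo]]) auto
      show "norm (\<phi> x) \<le> M" if "norm (0 - x) = s" for x
        using bound that elim by auto
    qed (use elim in auto)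
    then show ?case
      using elim by (simp add: fps_nth_fps_expansion[OF \<Phi>] norm_divide divide_simps mult.commute)
  qed
  moreover have "((\<lambda>s. M / s ^ j) \<longlongrightarrow> M / R ^ j) (at_left R)"
    using R by (intro tendsto_intros) auto
  ultimately show ?thesis
    using tendsto_le[OF trivial_limit_at_left_real] tendsto_const by blast
qed

lemma fps_expansion_nth_relation_of_ode:
  fixes f \<phi> :: "complex \<Rightarrow> complex" and F \<Phi> :: "complex fps"
  assumes F: "f has_fps_expansion F" and \<Phi>: "\<phi> has_fps_expansion \<Phi>"
    and ode: "eventually (\<lambda>w. w * deriv f w - f w = 1/2 * w^2 * \<phi> w) (nhds 0)"
    and k: "k \<ge> 2"
  shows "(of_nat k - 1) * F $ k = \<Phi> $ (k - 2) / 2"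
proof -
  have lhs: "(\<lambda>w. w * deriv f w - f w) has_fps_expansion fps_X * fps_deriv F - F"
    by (intro fps_expansion_intros F)
  have "(\<lambda>w. 1/2 * w^2 * \<phi> w) has_fps_expansion fps_const (1/2) * fps_X^2 * \<Phi>"
    by (intro fps_expansion_intros \<Phi>)
  then have rhs: "(\<lambda>w. w * deriv f w - f w) has_fps_expansion fps_const (1/2) * fps_X^2 * \<Phi>"
    using has_fps_expansion_cong[OF ode refl] by simp
  have "fps_X * fps_deriv F - F = fps_const (1/2) * fps_X^2 * \<Phi>"
    using fps_expansion_unique_complex[OF lhs rhs] .
  then have "(fps_X * fps_deriv F - F) $ k = (fps_const (1/2) * fps_X^2 * \<Phi>) $ k"
    by simp
  with k have "of_nat k * F $ k - F $ k = 1/2 * \<Phi> $ (k - 2)"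
    by (simp add: fps_X_power_mult_nth mult.assoc)
  then show ?thesis
    by (simp add: algebra_simps)
qed

lemma norm_taylor_coeff_le_of_ode:
  fixes f \<phi> :: "complex \<Rightarrow> complex" and F :: "complex fps"
  assumes F: "f has_fps_expansion F"
    and holo: "\<phi> holomorphic_on ball 0 1" and bound: "\<forall>w\<in>ball 0 1. norm (\<phi> w) \<le> 1"
    and ode: "\<forall>w\<in>ball 0 1. w * deriv f w - f w = 1/2 * w^2 * \<phi> w"
    and k: "k \<ge> 2"
  shows "norm (F $ k) \<le> 1 / (2 * (real k - 1))"
proof -
  have \<Phi>: "\<phi> has_fps_expansion fps_expansion \<phi> 0"
    by (rule has_fps_expansion_fps_expansion[OF open_ball _ holo]) simp
  have "eventually (\<lambda>w. w \<in> ball 0 1) (nhds (0::complex))"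
    by (intro eventually_nhds_in_open) auto
  then have "eventually (\<lambda>w. w * deriv f w - f w = 1/2 * w^2 * \<phi> w) (nhds 0)"
    by eventually_elim (use ode in auto)
  note relation = fps_expansion_nth_relation_of_ode[OF F \<Phi> this k]
  have "norm (of_nat k - 1 :: complex) = norm (of_real (real k - 1) :: complex)"
    by simp
  also have "\<dots> = real k - 1"
    by (subst norm_of_real) (use k in simp)
  finally have "(real k - 1) * norm (F $ k) = norm ((of_nat k - 1) * F $ k)"
    by (simp only: norm_mult)
  also have "\<dots> = norm (fps_expansion \<phi> 0 $ (k - 2)) / 2"
    by (simp only: relation norm_divide) simp
  also have "\<dots> \<le> 1 / 2"
    using norm_fps_expansion_nth_le[OF holo \<Phi> bound] by simp
  finally show ?thesis
    using k by (simp add: field_simps)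
qed

definition rho_coeff_bound :: "nat \<Rightarrow> real" where
  "rho_coeff_bound k = (if 3 \<le> k then 1 / (2 * (real k - 1)) else 0)"

lemma ln_one_minus_tail_sums:
  fixes r :: real
  assumes "\<bar>r\<bar> < 1"
  shows "(\<lambda>i. r ^ (i + 2) / real (i + 2)) sums (- ln (1 - r) - r)"
proof -
  have "(\<lambda>k. - (r ^ k) / real k) sums ln (1 - r)"
    using ln_series'[of "- r"] assms by simp
  then have "(\<lambda>k. r ^ k / real k) sums (- ln (1 - r))"
    using sums_minus by fastforce
  then show ?thesis
    by (subst sums_iff_shift) (simp add: numeral_2_eq_2)
qed

lemma rho_coeff_bound_sums:
  fixes r :: real
  assumes r: "\<bar>r\<bar> < 1"
  shows "(\<lambda>k. rho_coeff_bound k * r ^ k) sums (- (r / 2) * ln (1 - r) - r^2 / 2)"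
proof -
  have "(\<lambda>i. r / 2 * (r ^ (i + 2) / real (i + 2))) sums (r / 2 * (- ln (1 - r) - r))"
    by (rule sums_mult[OF ln_one_minus_tail_sums[OF r]])
  moreover have "r / 2 * (r ^ (i + 2) / real (i + 2)) = rho_coeff_bound (i + 3) * r ^ (i + 3)" for i
    by (simp add: rho_coeff_bound_def field_simps power_add eval_nat_numeral)
  ultimately have "(\<lambda>i. rho_coeff_bound (i + 3) * r ^ (i + 3)) sums (r / 2 * (- ln (1 - r) - r))"
    by simp
  also have "r / 2 * (- ln (1 - r) - r) = - (r / 2) * ln (1 - r) - r^2 / 2"
    by (simp add: algebra_simps power2_eq_square)
  finally show ?thesis
    by (subst (asm) sums_zero_iff_shift) (simp_all add: rho_coeff_bound_def)
qed

lemma rho_coeff_bound_deriv_sums: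
  fixes r :: real
  assumes r: "\<bar>r\<bar> < 1"
  shows "(\<lambda>k. (real (k + 1) * rho_coeff_bound (k + 1)) * r ^ k)
           sums ((2 * r^2 - r) / (2 * (1 - r)) - ln (1 - r) / 2)"
proof -
  have "(\<lambda>i. r^2 / 2 * r ^ i + 1 / 2 * (r ^ (i + 2) / real (i + 2)))
          sums (r^2 / 2 * (1 / (1 - r)) + 1 / 2 * (- ln (1 - r) - r))"
    using r by (intro sums_add sums_mult geometric_sums ln_one_minus_tail_sums) auto
  moreover have "r^2 / 2 * r ^ i + 1 / 2 * (r ^ (i + 2) / real (i + 2))
                   = real (i + 2 + 1) * rho_coeff_bound (i + 2 + 1) * r ^ (i + 2)" for i
    by (simp add: rho_coeff_bound_def field_simps power_add power2_eq_square)
  ultimately have "(\<lambda>i. real (i + 2 + 1) * rho_coeff_bound (i + 2 + 1) * r ^ (i + 2))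
                     sums (r^2 / 2 * (1 / (1 - r)) + 1 / 2 * (- ln (1 - r) - r))"
    by simp
  also have "r^2 / 2 * (1 / (1 - r)) + 1 / 2 * (- ln (1 - r) - r)
               = (2 * r^2 - r) / (2 * (1 - r)) - ln (1 - r) / 2"
    using r by (simp add: field_simps power2_eq_square)
  finally show ?thesis
    by (subst (asm) sums_zero_iff_shift) (simp_all add: rho_coeff_bound_def)
qed

lemma rho_coeff_bound_deriv2_sums:
  fixes r :: real
  assumes r: "\<bar>r\<bar> < 1"
  shows "(\<lambda>k. (real (k + 1) * real (k + 2) * rho_coeff_bound (k + 2)) * r ^ k)
           sums (r * (3 - 2 * r) / (2 * (1 - r)^2))"
proof -
  have "(\<lambda>i. r / 2 * (of_nat (Suc i) * r ^ i) + r * r ^ i)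
          sums (r / 2 * (1 / (1 - r)^2) + r * (1 / (1 - r)))"
    using r by (intro sums_add sums_mult geometric_deriv_sums geometric_sums) auto
  moreover have "r / 2 * (of_nat (Suc i) * r ^ i) + r * r ^ i
                   = real (i + 1 + 1) * real (i + 1 + 2) * rho_coeff_bound (i + 1 + 2) * r ^ (i + 1)" for i
    by (simp add: rho_coeff_bound_def field_simps)
  ultimately have "(\<lambda>i. real (i + 1 + 1) * real (i + 1 + 2) * rho_coeff_bound (i + 1 + 2) * r ^ (i + 1))
                     sums (r / 2 * (1 / (1 - r)^2) + r * (1 / (1 - r)))"
    by simp
  also have "r / 2 * (1 / (1 - r)^2) + r * (1 / (1 - r)) = r * (3 - 2 * r) / (2 * (1 - r)^2)"
    using r by (simp add: divide_simps) (simp add: algebra_simps power2_eq_square)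
  finally show ?thesis
    by (subst (asm) sums_zero_iff_shift) (simp_all add: rho_coeff_bound_def)
qed

lemma rho_eq_diff_taylor_polynomial:
  assumes "f holomorphic_on ball 0 R" "norm w < R"
  shows "rho f n w = f w - (\<Sum>k\<le>n. taylor_coeff f k * w ^ k)"
proof -
  have "(\<lambda>k. taylor_coeff f k * w ^ k) sums f w"
    using holomorphic_power_series[OF assms(1), of w] assms(2) by (simp add: taylor_coeff_def)
  from sums_split_initial_segment[OF this, of "Suc n"] show ?thesis
    by (simp add: rho_def sums_iff lessThan_Suc_atMost add.assoc)
qed

lemma rho_holomorphic:
  assumes "f holomorphic_on ball 0 R"
  shows "rho f n holomorphic_on ball 0 R"
proof (rule holomorphic_transform)
  show "(\<lambda>w. f w - (\<Sum>k\<le>n. taylor_coeff f k * w ^ k)) holomorphic_on ball 0 R"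
    by (intro holomorphic_intros assms)
qed (use rho_eq_diff_taylor_polynomial[OF assms] in auto)

lemma rho_has_fps_expansion:
  fixes F :: "complex fps"
  assumes holo: "f holomorphic_on ball 0 R" and R: "0 < R" and F: "f has_fps_expansion F"
  shows "rho f n has_fps_expansion F - fps_cutoff (Suc n) F"
proof -
  have "(\<lambda>w. \<Sum>k\<le>n. taylor_coeff f k * w ^ k)
          has_fps_expansion (\<Sum>k\<le>n. fps_const (taylor_coeff f k) * fps_X ^ k)"
    by (intro fps_expansion_intros)
  also have "(\<Sum>k\<le>n. fps_const (taylor_coeff f k) * fps_X ^ k) = fps_cutoff (Suc n) F"
    by (rule fps_ext)
      (simp add: fps_sum_nth fps_X_power_nth fps_expansion_nth_eq_taylor_coeff[OF F] if_distrib cong: if_cong)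
  finally have diff: "(\<lambda>w. f w - (\<Sum>k\<le>n. taylor_coeff f k * w ^ k))
                        has_fps_expansion F - fps_cutoff (Suc n) F"
    by (intro has_fps_expansion_diff F)
  have "eventually (\<lambda>w. w \<in> ball 0 R) (nhds 0)"
    using R by (intro eventually_nhds_in_open) auto
  then have "eventually (\<lambda>w. f w - (\<Sum>k\<le>n. taylor_coeff f k * w ^ k) = rho f n w) (nhds 0)"
    by eventually_elim (use rho_eq_diff_taylor_polynomial[OF holo] in auto)
  from has_fps_expansion_cong[OF this refl] diff show ?thesis
    by blast
qed

theorem lemma1p4:
  fixes f \<phi> :: "complex \<Rightarrow> complex" and n :: nat and z :: complex
  assumes hf: "f holomorphic_on ball 0 1"
    and f0: "f 0 = 0" and f'0: "deriv f 0 = 1"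
    and hphi: "\<phi> holomorphic_on ball 0 1"
    and phib: "\<forall>w\<in>ball 0 1. norm (\<phi> w) \<le> 1"
    and eq: "\<forall>w\<in>ball 0 1. w * deriv f w - f w = 1/2 * w^2 * \<phi> w"
    and n: "n \<ge> 2"
    and z: "norm z < 1"
  shows "norm (rho f n z) \<le> - (norm z / 2) * ln (1 - norm z) - (norm z)^2 / 2
       \<and> norm (deriv (rho f n) z) \<le> (2 * (norm z)^2 - norm z) / (2 * (1 - norm z)) - ln (1 - norm z) / 2
       \<and> norm (z * deriv (deriv (rho f n)) z) \<le> (norm z)^2 * (3 - 2 * norm z) / (2 * (1 - norm z)^2)"
proof -
  have F: "f has_fps_expansion fps_expansion f 0"
    by (rule has_fps_expansion_fps_expansion[OF open_ball _ hf]) simp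
  define P where "P = fps_expansion f 0 - fps_cutoff (Suc n) (fps_expansion f 0)"
  have holo: "rho f n holomorphic_on ball 0 1"
    by (rule rho_holomorphic[OF hf])
  have P: "rho f n has_fps_expansion P"
    unfolding P_def by (rule rho_has_fps_expansion[OF hf _ F]) simp
  have coeff: "norm (P $ k) \<le> rho_coeff_bound k" for k
  proof (cases "n < k")
    case True
    then show ?thesis
      using norm_taylor_coeff_le_of_ode[OF F hphi phib eq, of k] n
      by (simp add: P_def rho_coeff_bound_def)
  qed (simp add: P_def rho_coeff_bound_def)
  have r: "\<bar>norm z\<bar> < 1"
    using z by simp
  have "norm (deriv (deriv (rho f n)) z) \<le> norm z * (3 - 2 * norm z) / (2 * (1 - norm z)^2)"
    by (rule norm_deriv2_le_fps_majorant[OF holo P coeff rho_coeff_bound_deriv2_sums[OF r] z])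
  then have "norm (z * deriv (deriv (rho f n)) z)
               \<le> norm z * (norm z * (3 - 2 * norm z) / (2 * (1 - norm z)^2))"
    unfolding norm_mult by (rule mult_left_mono) simp
  also have "\<dots> = (norm z)^2 * (3 - 2 * norm z) / (2 * (1 - norm z)^2)"
    by (simp add: power2_eq_square)
  finally show ?thesis
    using norm_le_fps_majorant[OF holo P coeff rho_coeff_bound_sums[OF r] z]
      norm_deriv_le_fps_majorant[OF holo P coeff rho_coeff_bound_deriv_sums[OF r] z]
    by (intro conjI)
qed

end
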